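(* Let $\mathcal{S}$ be finite, $\Pi$ irreducible stochastic on $\mathcal{S}$, $\kappa(x,y):=\pi_{xy}-\mathbf{1}_{x=y}$, $\mathcal{K}=\Pi-\mathrm{I}$, $Q=(q(y))$ the invariant distribution, and assume detailed balance $q(y)\kappa(y,z)=q(z)\kappa(z,y)$ for all $y,z$. Let $\Phi:(0,\infty)\to\mathbb{R}$ be convex, continuously differentiable with continuous strictly positive second derivative, $\Phi(1)=0$, $\varphi:=\Phi'$. Let $\boldsymbol{\ell}_t=\ell(t,\cdot)$, $\ell(t,y):=p(t,y)/q(y)$, where $p(t,\cdot)$ is the time-$t$ law of the chain with generator $\mathcal{K}$ started from a positive initial distribution. Fix $t_0>0$, put $\boldsymbol{\ell}:=\boldsymbol{\ell}_{t_0}$, and let $(\psi_t)_{t_0\le t<t_0+\varepsilon}$ be continuous and $(\ell^\psi_t)$ positive with $\ell^\psi_{t_0}=\boldsymbol{\ell}_{t_0}$ and $\partial_t\ell^\psi_t+\nabla\cdot(\vartheta_{\boldsymbol{\ell}_t}\nabla\psi_t)=0$. Then $$\lim_{h\downarrow0}\frac1h\big\|\boldsymbol{\ell}_{t_0+h}-\boldsymbol{\ell}_{t_0}\big\|_{\mathbb{H}^{-1}_\Theta(\mathcal{S},\boldsymbol{\ell}Q)}=\big\|\mathcal{K}\boldsymbol{\ell}_{t_0}\big\|_{\mathbb{H}^{-1}_\Theta(\mathcal{S},\boldsymbol{\ell}Q)}=\big\|\varphi(\boldsymbol{\ell}_{t_0})\big\|_{\mathbb{H}^1_\Theta(\mathcal{S},\boldsymbol{\ell}Q)},$$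 and $$\lim_{h\downarrow0}\frac1h\big\|\ell^\psi_{t_0+h}-\ell^\psi_{t_0}\big\|_{\mathbb{H}^{-1}_\Theta(\mathcal{S},\boldsymbol{\ell}Q)}=\big\|\nabla\cdot(\vartheta_{\boldsymbol{\ell}_{t_0}}\nabla\psi_{t_0})\big\|_{\mathbb{H}^{-1}_\Theta(\mathcal{S},\boldsymbol{\ell}Q)}=\big\|\psi_{t_0}\big\|_{\mathbb{H}^1_\Theta(\mathcal{S},\boldsymbol{\ell}Q)} .$$
   Context: $\mathcal{Z}:=\{(x,y):\kappa(x,y)>0\}$, $c(x,y):=\frac12\kappa(x,y)q(x)$, $\nabla f(x,y):=f(y)-f(x)$, $(\nabla\cdot F)(x):=\frac12\sum_{y\neq x}\kappa(x,y)[F(x,y)-F(y,x)]$. $\Theta^\Phi(a,b):=\frac{a-b}{\varphi(a)-\varphi(b)}$ for $a\ne b$, $\Theta^\Phi(b,b):=1/\Phi''(b)$; for positive $\ell$, $\vartheta_\ell(x,y):=\Theta^\Phi(\ell(x),\ell(y))$. $\|f\|^2_{\mathbb{H}^1_\Theta(\mathcal{S},\ell Q)}:=\sum_{(x,y)\in\mathcal{Z}}c(x,y)\vartheta_\ell(x,y)(\nabla f(x,y))^2$, and $\|f\|_{\mathbb{H}^{-1}_\Theta(\mathcal{S},\ell Q)}:=\sup_{g:\mathcal{S}\to\mathbb{R}}\frac{\sum_xq(x)f(x)g(x)}{\|g\|_{\mathbb{H}^1_\Theta(\mathcal{S},\ell Q)}}$. *)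

theory Defs
  imports "HOL-Analysis.Analysis"
begin

definition kappa_of :: "('a \<Rightarrow> 'a \<Rightarrow> real) \<Rightarrow> 'a \<Rightarrow> 'a \<Rightarrow> real" where
  "kappa_of P x y = P x y - (if x = y then 1 else 0)"

definition stochastic :: "('a::finite \<Rightarrow> 'a \<Rightarrow> real) \<Rightarrow> bool" where
  "stochastic P \<longleftrightarrow> (\<forall>x y. P x y \<ge> 0) \<and> (\<forall>x. (\<Sum>y\<in>UNIV. P x y) = 1)"

definition irreducible_chain :: "('a \<Rightarrow> 'a \<Rightarrow> real) \<Rightarrow> bool" where
  "irreducible_chain P \<longleftrightarrow> (\<forall>x y. (x, y) \<in> {(a, b). P a b > 0}\<^sup>*)"

definition invariant_distribution :: "('a::finite \<Rightarrow> 'a \<Rightarrow> real) \<Rightarrow> ('a \<Rightarrow> real) \<Rightarrow> bool" where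
  "invariant_distribution P q \<longleftrightarrow> (\<forall>x. q x \<ge> 0) \<and> (\<Sum>x\<in>UNIV. q x) = 1 \<and>
     (\<forall>y. (\<Sum>x\<in>UNIV. q x * P x y) = q y)"

definition gen :: "('a::finite \<Rightarrow> 'a \<Rightarrow> real) \<Rightarrow> ('a \<Rightarrow> real) \<Rightarrow> 'a \<Rightarrow> real" where
  "gen kap f x = (\<Sum>y\<in>UNIV. kap x y * f y)"

definition grad :: "('a \<Rightarrow> real) \<Rightarrow> 'a \<Rightarrow> 'a \<Rightarrow> real" where
  "grad f x y = f y - f x"

definition divg :: "('a::finite \<Rightarrow> 'a \<Rightarrow> real) \<Rightarrow> ('a \<Rightarrow> 'a \<Rightarrow> real) \<Rightarrow> 'a \<Rightarrow> real" where
  "divg kap F x = (1/2) * (\<Sum>y\<in>UNIV - {x}. kap x y * (F x y - F y x))"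

text \<open>Theta^Phi(a,b); phi = Phi', phi2 = Phi''.\<close>
definition Theta :: "(real \<Rightarrow> real) \<Rightarrow> (real \<Rightarrow> real) \<Rightarrow> real \<Rightarrow> real \<Rightarrow> real" where
  "Theta phi phi2 a b = (if a \<noteq> b then (a - b) / (phi a - phi b) else 1 / phi2 b)"

definition vartheta :: "(real \<Rightarrow> real) \<Rightarrow> (real \<Rightarrow> real) \<Rightarrow> ('a \<Rightarrow> real) \<Rightarrow> 'a \<Rightarrow> 'a \<Rightarrow> real" where
  "vartheta phi phi2 l x y = Theta phi phi2 (l x) (l y)"

definition flux :: "(real \<Rightarrow> real) \<Rightarrow> (real \<Rightarrow> real) \<Rightarrow> ('a \<Rightarrow> real) \<Rightarrow> ('a \<Rightarrow> real) \<Rightarrow> 'a \<Rightarrow> 'a \<Rightarrow> real" where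
  "flux phi phi2 l f x y = vartheta phi phi2 l x y * grad f x y"

definition H1norm :: "('a::finite \<Rightarrow> 'a \<Rightarrow> real) \<Rightarrow> ('a \<Rightarrow> real) \<Rightarrow> (real \<Rightarrow> real) \<Rightarrow> (real \<Rightarrow> real)
    \<Rightarrow> ('a \<Rightarrow> real) \<Rightarrow> ('a \<Rightarrow> real) \<Rightarrow> real" where
  "H1norm kap q phi phi2 l f =
     sqrt (\<Sum>(x, y)\<in>{(x, y). kap x y > 0}. (1/2) * kap x y * q x * vartheta phi phi2 l x y * (grad f x y)\<^sup>2)"

definition Hm1norm :: "('a::finite \<Rightarrow> 'a \<Rightarrow> real) \<Rightarrow> ('a \<Rightarrow> real) \<Rightarrow> (real \<Rightarrow> real) \<Rightarrow> (real \<Rightarrow> real)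
    \<Rightarrow> ('a \<Rightarrow> real) \<Rightarrow> ('a \<Rightarrow> real) \<Rightarrow> ereal" where
  "Hm1norm kap q phi phi2 l f =
     (SUP g\<in>UNIV. (let n = (\<Sum>x\<in>UNIV. q x * f x * g x); d = H1norm kap q phi phi2 l g in
        if d = 0 then (if n = 0 then 0 else \<infinity>) else ereal (n / d)))"

end

theory Submission
  imports Defs
begin

(* Detailed balance allows summation by parts: against every test function g, the Q-pairing of
   K l equals -B(phi(l), g) and that of div(vartheta_l grad psi) equals -B(psi, g), where B is the
   bilinear form of the H^1_Theta(lQ) norm; for K l this uses vartheta_l grad phi(l) = grad l.
   By Cauchy-Schwarz, with equality at g = -u, a functional represented as -B(u, .) has H^-1 norm
   equal to the H^1 norm of u.
   Both curves conserve Q-mass, and on Q-mean-zero functions irreducibility yields a Poincare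
   inequality |g x - g y| <= C ||g||_H^1. It makes the H^-1 norm finite, positively homogeneous and
   Lipschitz for the Q-weighted L^1 norm, so the norm commutes with the limit of the difference
   quotients. Positivity of l_t0, needed for vartheta > 0, comes from that of the forward equation. *)

section \<open>Calculus on the time axis\<close>

lemma strict_mono_on_if_deriv_pos:
  fixes f :: "real \<Rightarrow> real"
  assumes "\<And>x. a < x \<Longrightarrow> (f has_real_derivative f' x) (at x)" and "\<And>x. a < x \<Longrightarrow> 0 < f' x"
  shows "strict_mono_on {a<..} f"
proof (rule strict_mono_onI)
  fix r s assume "r \<in> {a<..}" "s \<in> {a<..}" "r < s"
  then show "f r < f s"
    using assms by (intro DERIV_pos_imp_increasing[OF \<open>r < s\<close>]) (meson greaterThan_iff less_le_trans)
qed

lemma difference_quotient_tendsto_at_right: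
  fixes f :: "real \<Rightarrow> real"
  assumes "(f has_real_derivative D) (at t within S)" and "{t..<t + e} \<subseteq> S" and "0 < e"
  shows "((\<lambda>h. (f (t + h) - f t) / h) \<longlongrightarrow> D) (at_right 0)"
proof -
  have "{t..t + e/2} \<subseteq> S" using assms(2,3) by auto
  with assms(1) have "(f has_real_derivative D) (at t within {t..t + e/2})"
    by (rule has_field_derivative_subset)
  then have "((\<lambda>s. (f s - f t) / (s - t)) \<longlongrightarrow> D) (at_right t)"
    unfolding has_field_derivative_iff using at_within_Icc_at_right[of t "t + e/2"] assms(3) by simp
  then show ?thesis
    unfolding filterlim_at_right_to_0[of _ _ t] by (simp add: add.commute)
qed

lemma weighted_sum_eq_if_has_derivative:
  fixes f f' :: "real \<Rightarrow> 'a::finite \<Rightarrow> real"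
  assumes "convex S"
    and deriv: "\<And>t y. t \<in> S \<Longrightarrow> ((\<lambda>s. f s y) has_real_derivative f' t y) (at t within S)"
    and balance: "\<And>t. t \<in> S \<Longrightarrow> (\<Sum>y\<in>UNIV. w y * f' t y) = 0"
    and "s \<in> S" "t \<in> S"
  shows "(\<Sum>y\<in>UNIV. w y * f s y) = (\<Sum>y\<in>UNIV. w y * f t y)"
proof -
  have "((\<lambda>s. \<Sum>y\<in>UNIV. w y * f s y) has_real_derivative 0) (at t within S)" if "t \<in> S" for t
    using DERIV_sum[of UNIV "\<lambda>s y. w y * f s y" "\<lambda>y. w y * f' t y", OF DERIV_cmult[OF deriv]]
      balance that by simp
  then obtain c where "\<forall>t\<in>S. (\<Sum>y\<in>UNIV. w y * f t y) = c"
    using has_field_derivative_zero_constant[OF \<open>convex S\<close>] by blast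
  then show ?thesis using \<open>s \<in> S\<close> \<open>t \<in> S\<close> by simp
qed

lemma first_nonpos_time:
  fixes f :: "real \<Rightarrow> 'a::finite \<Rightarrow> real"
  assumes cont: "\<And>y. continuous_on {0..t} (\<lambda>s. f s y)" and "0 \<le> t" and "f t y \<le> 0"
  obtains \<tau> w where "\<tau> \<in> {0..t}" and "f \<tau> w \<le> 0" and "\<And>s v. 0 \<le> s \<Longrightarrow> s < \<tau> \<Longrightarrow> 0 < f s v"
proof -
  define Z where "Z = {s \<in> {0..t}. \<exists>w. f s w \<le> 0}"
  have "Z = (\<Union>w. {0..t} \<inter> (\<lambda>s. f s w) -` {..0})" unfolding Z_def by auto
  moreover have "closed (\<Union>w. {0..t} \<inter> (\<lambda>s. f s w) -` {..0})"
    by (intro closed_UN ballI continuous_closed_preimage cont) auto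
  ultimately have "closed Z" by simp
  moreover have "t \<in> Z" using assms unfolding Z_def by auto
  moreover have Z_bdd: "bdd_below Z" unfolding Z_def by (intro bdd_belowI[of _ 0]) auto
  ultimately have "Inf Z \<in> Z" using closed_contains_Inf by blast
  then obtain w where "Inf Z \<in> {0..t}" "f (Inf Z) w \<le> 0" unfolding Z_def by auto
  moreover have "0 < f s v" if "0 \<le> s" "s < Inf Z" for s v
  proof (rule ccontr)
    assume "\<not> 0 < f s v"
    then have "s \<in> Z" using that \<open>Inf Z \<in> {0..t}\<close> unfolding Z_def by (auto simp: not_less)
    then show False using cInf_lower[OF _ Z_bdd] that by (simp add: not_le[symmetric])
  qed
  ultimately show ?thesis using that by blast
qed

section \<open>The weight $\Theta$ and fluxes\<close>

lemma Theta_sym: "Theta phi phi2 a b = Theta phi phi2 b a"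
proof (cases "a = b")
  case False
  have "(b - a) / (phi b - phi a) = (a - b) / (phi a - phi b)"
    using minus_divide_divide[of "a - b" "phi a - phi b"] by simp
  then show ?thesis using False by (simp add: Theta_def)
qed simp

lemma flux_antisym: "flux phi phi2 l u y x = - flux phi phi2 l u x y"
  unfolding flux_def vartheta_def grad_def using Theta_sym[of phi phi2 "l x" "l y"]
  by (simp add: algebra_simps)

lemma Theta_pos:
  assumes "strict_mono_on {0<..} phi" and "\<And>x. 0 < x \<Longrightarrow> 0 < phi2 x" and "0 < a" "0 < b"
  shows "0 < Theta phi phi2 a b"
proof (cases a b rule: linorder_cases)
  case less
  then have "phi a < phi b" using assms by (simp add: strict_mono_onD)
  then show ?thesis using less by (simp add: Theta_def divide_neg_neg)
next
  case greater
  then have "phi b < phi a" using assms by (simp add: strict_mono_onD)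
  then show ?thesis using greater by (simp add: Theta_def)
qed (simp add: Theta_def assms)

lemma Theta_mult_diff:
  assumes "strict_mono_on {0<..} phi" and "0 < a" "0 < b"
  shows "Theta phi phi2 a b * (phi b - phi a) = b - a"
proof (cases "a = b")
  case False
  then have "phi a \<noteq> phi b"
    using strict_mono_on_imp_inj_on[OF assms(1)] assms(2,3) by (auto simp: inj_on_def)
  then show ?thesis using False by (simp add: Theta_def field_simps)
qed simp

lemma divg_flux: "divg kap (flux phi phi2 l u) x = (\<Sum>y\<in>UNIV. kap x y * flux phi phi2 l u x y)"
proof -
  let ?F = "flux phi phi2 l u"
  have "divg kap ?F x = (1/2) * (\<Sum>y\<in>UNIV. kap x y * (?F x y - ?F y x))"
    unfolding divg_def by (subst sum.remove[of UNIV x]) simp_all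
  also have "\<dots> = (1/2) * (\<Sum>y\<in>UNIV. kap x y * (2 * ?F x y))"
    using flux_antisym[of phi phi2 l u _ x] by simp
  also have "\<dots> = (\<Sum>y\<in>UNIV. kap x y * ?F x y)"
    by (simp add: sum_distrib_left)
  finally show ?thesis .
qed

section \<open>The $H^1_\Theta$ norm and its dual\<close>

definition H1inner :: "('a::finite \<Rightarrow> 'a \<Rightarrow> real) \<Rightarrow> ('a \<Rightarrow> real) \<Rightarrow> (real \<Rightarrow> real) \<Rightarrow> (real \<Rightarrow> real)
    \<Rightarrow> ('a \<Rightarrow> real) \<Rightarrow> ('a \<Rightarrow> real) \<Rightarrow> ('a \<Rightarrow> real) \<Rightarrow> real" where
  "H1inner kap q phi phi2 l u g =
     (\<Sum>(x, y)\<in>{(x, y). kap x y > 0}. (1/2) * kap x y * q x * vartheta phi phi2 l x y * (grad u x y * grad g x y))"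

lemma H1inner_const_right: "H1inner kap q phi phi2 l u (\<lambda>_. c) = 0"
  unfolding H1inner_def grad_def by simp

lemma H1norm_uminus: "H1norm kap q phi phi2 l (\<lambda>x. - u x) = H1norm kap q phi phi2 l u"
  unfolding H1norm_def grad_def by (simp add: power2_commute)

lemma Hm1norm_uminus: "Hm1norm kap q phi phi2 l (\<lambda>x. - f x) = Hm1norm kap q phi phi2 l f"
proof -
  have "(\<Sum>x\<in>UNIV. q x * - f x * g x) = (\<Sum>x\<in>UNIV. q x * f x * - g x)" for g :: "'a \<Rightarrow> real"
    by simp
  then have "Hm1norm kap q phi phi2 l (\<lambda>x. - f x)
      = (SUP g\<in>range (\<lambda>g x. - g x). (let n = (\<Sum>x\<in>UNIV. q x * f x * g x); d = H1norm kap q phi phi2 l g in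
          if d = 0 then (if n = 0 then 0 else \<infinity>) else ereal (n / d)))"
    unfolding Hm1norm_def image_image by (simp add: Let_def H1norm_uminus)
  also have "range (\<lambda>(g::'a \<Rightarrow> real) x. - g x) = UNIV"
    by (rule surjI[where f = "\<lambda>g x. - g x"]) simp
  finally show ?thesis unfolding Hm1norm_def .
qed

locale H1_weights =
  fixes kap :: "'a::finite \<Rightarrow> 'a \<Rightarrow> real" and q :: "'a \<Rightarrow> real"
    and phi phi2 :: "real \<Rightarrow> real" and l :: "'a \<Rightarrow> real"
  assumes q_vartheta_nonneg: "0 < kap x y \<Longrightarrow> 0 \<le> q x * vartheta phi phi2 l x y"
begin

abbreviation "H1 \<equiv> H1norm kap q phi phi2 l"
abbreviation "B \<equiv> H1inner kap q phi phi2 l"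
abbreviation "Hm1 \<equiv> Hm1norm kap q phi phi2 l"
abbreviation "weight x y \<equiv> (1/2) * kap x y * q x * vartheta phi phi2 l x y"
abbreviation "Z \<equiv> {(x, y). 0 < kap x y}"

lemma weight_nonneg: "0 < kap x y \<Longrightarrow> 0 \<le> weight x y"
  using q_vartheta_nonneg[of x y] by (simp add: mult.assoc)

lemma H1norm_nonneg: "0 \<le> H1 g"
  unfolding H1norm_def using weight_nonneg by (intro real_sqrt_ge_zero sum_nonneg) auto

lemma H1inner_self: "B u u = (H1 u)\<^sup>2"
proof -
  have "0 \<le> (\<Sum>(x, y)\<in>Z. weight x y * (grad u x y)\<^sup>2)"
    using weight_nonneg by (intro sum_nonneg) auto
  then show ?thesis unfolding H1inner_def H1norm_def by (simp add: power2_eq_square)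
qed

lemma H1inner_abs_le: "\<bar>B u g\<bar> \<le> H1 u * H1 g"
proof -
  define a where "a v z = sqrt (weight (fst z) (snd z)) * grad v (fst z) (snd z)" for v z
  have B: "B u g = (\<Sum>z\<in>Z. a u z * a g z)"
    unfolding H1inner_def a_def case_prod_beta
    by (intro sum.cong refl) (use weight_nonneg in \<open>auto simp: algebra_simps\<close>)
  have H1: "H1 v = sqrt (\<Sum>z\<in>Z. (a v z)\<^sup>2)" for v
    unfolding H1norm_def a_def case_prod_beta
    by (intro arg_cong[where f = sqrt] sum.cong refl) (use weight_nonneg in \<open>auto simp: power_mult_distrib\<close>)
  have "sqrt ((B u g)\<^sup>2) \<le> sqrt ((\<Sum>z\<in>Z. (a u z)\<^sup>2) * (\<Sum>z\<in>Z. (a g z)\<^sup>2))"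
    unfolding B by (intro real_sqrt_le_mono Cauchy_Schwarz_ineq_sum)
  then show ?thesis unfolding H1 by (simp add: real_sqrt_mult)
qed

lemma Hm1norm_eq_H1norm:
  assumes repr: "\<And>g. (\<Sum>x\<in>UNIV. q x * f x * g x) = - B u g"
  shows "Hm1 f = ereal (H1 u)"
  unfolding Hm1norm_def Let_def
proof (rule antisym)
  show "(SUP g. if H1 g = 0 then if (\<Sum>x\<in>UNIV. q x * f x * g x) = 0 then 0 else \<infinity>
          else ereal ((\<Sum>x\<in>UNIV. q x * f x * g x) / H1 g)) \<le> ereal (H1 u)"
  proof (rule SUP_least)
    fix g
    have "\<bar>\<Sum>x\<in>UNIV. q x * f x * g x\<bar> \<le> H1 u * H1 g"
      using H1inner_abs_le[of u g] by (simp add: repr)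
    moreover have "0 \<le> H1 g" "0 \<le> H1 u" by (rule H1norm_nonneg)+
    ultimately show "(if H1 g = 0 then if (\<Sum>x\<in>UNIV. q x * f x * g x) = 0 then 0 else \<infinity>
          else ereal ((\<Sum>x\<in>UNIV. q x * f x * g x) / H1 g)) \<le> ereal (H1 u)"
      by (auto simp: divide_le_eq)
  qed
next
  \<comment> \<open>The supremum is attained at \<open>g = - u\<close>.\<close>
  have "(\<Sum>x\<in>UNIV. q x * f x * - u x) = (H1 u)\<^sup>2"
    using repr[of "\<lambda>x. - u x"] H1inner_self[of u]
    by (simp add: H1inner_def grad_def sum_negf[symmetric] case_prod_beta algebra_simps)
  then show "ereal (H1 u) \<le> (SUP g. if H1 g = 0 then if (\<Sum>x\<in>UNIV. q x * f x * g x) = 0 then 0 else \<infinity>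
          else ereal ((\<Sum>x\<in>UNIV. q x * f x * g x) / H1 g))"
    by (intro SUP_upper2[where i = "\<lambda>x. - u x"]) (auto simp: power2_eq_square H1norm_uminus)
qed

lemma grad_abs_le_H1norm:
  assumes "0 < kap a b" and "0 < q a * vartheta phi phi2 l a b"
  shows "\<bar>g b - g a\<bar> \<le> H1 g / sqrt (weight a b)"
proof -
  have pos: "0 < weight a b" using assms by (simp add: mult.assoc)
  have "weight a b * (grad g a b)\<^sup>2 \<le> (\<Sum>(x, y)\<in>Z. weight x y * (grad g x y)\<^sup>2)"
    using member_le_sum[of "(a, b)" Z "\<lambda>(x, y). weight x y * (grad g x y)\<^sup>2"] assms(1) weight_nonneg
    by (simp add: case_prod_beta)
  then have "sqrt (weight a b * (grad g a b)\<^sup>2) \<le> H1 g"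
    unfolding H1norm_def by (rule real_sqrt_le_mono)
  moreover have "sqrt (weight a b * (grad g a b)\<^sup>2) = sqrt (weight a b) * \<bar>g b - g a\<bar>"
    by (simp only: real_sqrt_mult real_sqrt_abs grad_def)
  ultimately have "sqrt (weight a b) * \<bar>g b - g a\<bar> \<le> H1 g" by simp
  then show ?thesis using pos by (simp add: le_divide_eq mult.commute)
qed

lemma H1norm_path_bound:
  assumes "(x, y) \<in> {(a, b). 0 < kap a b \<and> 0 < q a * vartheta phi phi2 l a b}\<^sup>*"
  shows "\<exists>C. \<forall>g. \<bar>g y - g x\<bar> \<le> C * H1 g"
  using assms
proof (induction rule: rtrancl_induct)
  case base
  show ?case by (intro exI[of _ 0]) simp
next
  case (step b c)
  then obtain C where C: "\<forall>g. \<bar>g b - g x\<bar> \<le> C * H1 g" by blast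
  have "\<bar>g c - g x\<bar> \<le> (C + 1 / sqrt (weight b c)) * H1 g" for g
  proof -
    have "0 < kap b c" "0 < q b * vartheta phi phi2 l b c" using step(2) by auto
    then have "\<bar>g c - g x\<bar> \<le> C * H1 g + H1 g / sqrt (weight b c)"
      using C[rule_format, of g] grad_abs_le_H1norm[of b c g] by linarith
    then show ?thesis by (simp add: algebra_simps)
  qed
  then show ?case by blast
qed

lemma H1norm_poincare:
  assumes "\<And>x y. (x, y) \<in> {(a, b). 0 < kap a b \<and> 0 < q a * vartheta phi phi2 l a b}\<^sup>*"
  shows "\<exists>C\<ge>0. \<forall>g x y. \<bar>g x - g y\<bar> \<le> C * H1 g"
proof -
  define Cp where "Cp x y = (SOME C. \<forall>g. \<bar>g y - g x\<bar> \<le> C * H1 g)" for x y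
  have Cp: "\<bar>g y - g x\<bar> \<le> Cp x y * H1 g" for x y g
    unfolding Cp_def using someI_ex[OF H1norm_path_bound[OF assms]] by blast
  define C where "C = (\<Sum>z\<in>UNIV. \<bar>Cp (fst z) (snd z)\<bar>)"
  have "\<bar>g x - g y\<bar> \<le> C * H1 g" for g x y
  proof -
    have "Cp y x \<le> C"
      using member_le_sum[of "(y, x)" UNIV "\<lambda>z. \<bar>Cp (fst z) (snd z)\<bar>"] unfolding C_def by simp
    then show ?thesis using Cp[where x = y and y = x] H1norm_nonneg[of g] by (meson mult_right_mono order_trans)
  qed
  moreover have "0 \<le> C" unfolding C_def by (simp add: sum_nonneg)
  ultimately show ?thesis by blast
qed

end

locale H1_poincare = H1_weights +
  fixes C :: real
  assumes poincare_const_nonneg: "0 \<le> C"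
    and poincare: "\<bar>g x - g y\<bar> \<le> C * H1norm kap q phi phi2 l g"
begin

abbreviation "L1 f \<equiv> (\<Sum>x\<in>UNIV. \<bar>q x * f x\<bar>)"

(* Unlike in Hm1norm, a test function of zero energy contributes 0 rather than \<infinity>. *)
definition dual_quotient :: "('a \<Rightarrow> real) \<Rightarrow> ('a \<Rightarrow> real) \<Rightarrow> real" where
  "dual_quotient f g = (if H1 g = 0 then 0 else (\<Sum>x\<in>UNIV. q x * f x * g x) / H1 g)"

definition dual_norm :: "('a \<Rightarrow> real) \<Rightarrow> real" where
  "dual_norm f = (SUP g. dual_quotient f g)"

lemma pairing_abs_le:
  assumes mean: "(\<Sum>x\<in>UNIV. q x * f x) = 0"
  shows "\<bar>\<Sum>x\<in>UNIV. q x * f x * g x\<bar> \<le> C * L1 f * H1 g"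
proof -
  fix x0 :: 'a
  have "(\<Sum>x\<in>UNIV. q x * f x * g x) = (\<Sum>x\<in>UNIV. q x * f x * (g x - g x0))"
    using mean by (simp add: right_diff_distrib sum_subtractf sum_distrib_right[symmetric])
  also have "\<bar>\<dots>\<bar> \<le> (\<Sum>x\<in>UNIV. \<bar>q x * f x\<bar> * (C * H1 g))"
    by (rule order_trans[OF sum_abs sum_mono]) (simp add: abs_mult mult_left_mono poincare)
  also have "\<dots> = L1 f * (C * H1 g)"
    by (simp only: sum_distrib_right)
  finally show ?thesis by (simp only: mult_ac)
qed

lemma dual_quotient_abs_le:
  assumes "(\<Sum>x\<in>UNIV. q x * f x) = 0"
  shows "\<bar>dual_quotient f g\<bar> \<le> C * L1 f"
proof (cases "H1 g = 0")
  case True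
  then show ?thesis
    unfolding dual_quotient_def using poincare_const_nonneg by (simp add: sum_nonneg)
next
  case False
  then have "0 < H1 g" using H1norm_nonneg[of g] by linarith
  then show ?thesis
    using pairing_abs_le[OF assms, of g] False
    by (simp add: dual_quotient_def divide_le_eq)
qed

lemma dual_quotient_bdd_above:
  assumes "(\<Sum>x\<in>UNIV. q x * f x) = 0"
  shows "bdd_above (range (dual_quotient f))"
  using dual_quotient_abs_le[OF assms] by (intro bdd_aboveI[of _ "C * L1 f"]) (auto simp: abs_le_iff)

lemma Hm1norm_eq_dual_norm:
  assumes mean: "(\<Sum>x\<in>UNIV. q x * f x) = 0"
  shows "Hm1 f = ereal (dual_norm f)"
proof -
  \<comment> \<open>By the Poincare inequality a test function of zero energy is constant, so it pairs
    to zero with \<open>f\<close>: the value \<open>\<infinity>\<close> never occurs.\<close>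
  have "(\<Sum>x\<in>UNIV. q x * f x * g x) = 0" if "H1 g = 0" for g
    using pairing_abs_le[OF mean, of g] that by simp
  then have "Hm1 f = (SUP g. ereal (dual_quotient f g))"
    unfolding Hm1norm_def Let_def dual_quotient_def by (intro SUP_cong refl) auto
  also have "\<dots> = ereal (dual_norm f)"
    unfolding dual_norm_def
  proof (rule ereal_SUP[symmetric])
    have "(SUP g. ereal (dual_quotient f g)) \<le> ereal (C * L1 f)"
      using dual_quotient_abs_le[OF mean] by (intro SUP_least) (auto simp: abs_le_iff)
    moreover have "ereal (dual_quotient f (\<lambda>_. 0)) \<le> (SUP g. ereal (dual_quotient f g))"
      by (rule SUP_upper) simp
    ultimately show "\<bar>SUP g. ereal (dual_quotient f g)\<bar> \<noteq> \<infinity>"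
      by (auto simp: dual_quotient_def)
  qed
  finally show ?thesis .
qed

lemma dual_norm_le:
  assumes "(\<Sum>x\<in>UNIV. q x * f x) = 0" and "(\<Sum>x\<in>UNIV. q x * f' x) = 0"
  shows "dual_norm f \<le> dual_norm f' + C * L1 (\<lambda>x. f x - f' x)"
  unfolding dual_norm_def
proof (rule cSUP_least)
  fix g
  have "(\<Sum>x\<in>UNIV. q x * (f x - f' x)) = 0"
    using assms by (simp add: right_diff_distrib sum_subtractf)
  from dual_quotient_abs_le[OF this, of g]
  have "dual_quotient (\<lambda>x. f x - f' x) g \<le> C * L1 (\<lambda>x. f x - f' x)"
    by (simp add: abs_le_iff)
  moreover have "dual_quotient f' g \<le> (SUP g. dual_quotient f' g)"
    by (rule cSUP_upper[OF _ dual_quotient_bdd_above[OF assms(2)]]) simp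
  moreover have "dual_quotient f g = dual_quotient f' g + dual_quotient (\<lambda>x. f x - f' x) g"
    unfolding dual_quotient_def by (simp add: right_diff_distrib left_diff_distrib sum_subtractf diff_divide_distrib)
  ultimately show "dual_quotient f g \<le> (SUP g. dual_quotient f' g) + C * L1 (\<lambda>x. f x - f' x)"
    by linarith
qed simp

lemma dual_norm_lipschitz:
  assumes "(\<Sum>x\<in>UNIV. q x * f x) = 0" and "(\<Sum>x\<in>UNIV. q x * f' x) = 0"
  shows "\<bar>dual_norm f - dual_norm f'\<bar> \<le> C * L1 (\<lambda>x. f x - f' x)"
proof -
  have "L1 (\<lambda>x. f' x - f x) = L1 (\<lambda>x. f x - f' x)"
    by (simp add: abs_minus_commute right_diff_distrib)
  then show ?thesis
    using dual_norm_le[OF assms] dual_norm_le[OF assms(2,1)] by (simp add: abs_le_iff)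
qed

lemma dual_norm_scale:
  assumes mean: "(\<Sum>x\<in>UNIV. q x * f x) = 0" and "0 < c"
  shows "dual_norm (\<lambda>x. c * f x) = c * dual_norm f"
proof -
  have "dual_quotient (\<lambda>x. c * f x) = (\<lambda>g. c * dual_quotient f g)"
    by (simp add: dual_quotient_def sum_distrib_left mult_ac fun_eq_iff)
  moreover have "c * dual_norm f = (SUP s\<in>range (dual_quotient f). c * s)"
    unfolding dual_norm_def
  proof (rule continuous_at_Sup_mono)
    show "mono (\<lambda>s. c * s)" using \<open>0 < c\<close> by (simp add: mono_def)
    show "continuous (at_left (Sup (range (dual_quotient f)))) (\<lambda>s. c * s)"
      by (intro continuous_intros)
  qed (simp_all add: dual_quotient_bdd_above[OF mean])
  ultimately show ?thesis
    unfolding dual_norm_def by (simp add: image_comp comp_def)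
qed

lemma Hm1norm_scaled_tendsto:
  assumes mean_F: "\<forall>\<^sub>F h in at_right 0. (\<Sum>x\<in>UNIV. q x * F h x) = 0"
    and mean: "(\<Sum>x\<in>UNIV. q x * f x) = 0"
    and conv: "\<And>y. ((\<lambda>h. F h y / h) \<longlongrightarrow> f y) (at_right 0)"
  shows "((\<lambda>h. ereal (1/h) * Hm1 (F h)) \<longlongrightarrow> Hm1 f) (at_right (0::real))"
proof -
  define G where "G h x = F h x / h" for h x
  have mean_G: "\<forall>\<^sub>F h in at_right 0. (\<Sum>x\<in>UNIV. q x * G h x) = 0"
    using mean_F by eventually_elim (simp add: G_def sum_divide_distrib[symmetric])
  have scaled: "\<forall>\<^sub>F h in at_right 0. ereal (1/h) * Hm1 (F h) = ereal (dual_norm (G h))"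
    using mean_F eventually_at_right_less[of 0]
  proof eventually_elim
    case (elim h)
    have "(\<lambda>x. 1/h * F h x) = G h" by (simp add: G_def fun_eq_iff)
    then show ?case
      using Hm1norm_eq_dual_norm[OF elim(1)] dual_norm_scale[OF elim(1), of "1/h"] elim(2) by simp
  qed
  have "((\<lambda>h. dual_norm (G h)) \<longlongrightarrow> dual_norm f) (at_right 0)"
  proof -
    have "((\<lambda>h. C * L1 (\<lambda>x. G h x - f x)) \<longlongrightarrow> C * L1 (\<lambda>x. f x - f x)) (at_right 0)"
      unfolding G_def by (intro tendsto_intros conv)
    then have "((\<lambda>h. C * L1 (\<lambda>x. G h x - f x)) \<longlongrightarrow> 0) (at_right 0)" by simp
    moreover have "\<forall>\<^sub>F h in at_right 0. norm (dual_norm (G h) - dual_norm f) \<le> C * L1 (\<lambda>x. G h x - f x)"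
      using mean_G by eventually_elim (simp add: dual_norm_lipschitz[OF _ mean])
    ultimately have "((\<lambda>h. dual_norm (G h) - dual_norm f) \<longlongrightarrow> 0) (at_right 0)"
      by (rule Lim_null_comparison[rotated])
    then show ?thesis by (simp add: LIM_zero_iff)
  qed
  then have "((\<lambda>h. ereal (dual_norm (G h))) \<longlongrightarrow> Hm1 f) (at_right 0)"
    unfolding Hm1norm_eq_dual_norm[OF mean] by (rule tendsto_ereal)
  then show ?thesis using tendsto_cong[OF scaled] by simp
qed

lemma Hm1norm_difference_quotient_tendsto:
  assumes S: "convex S" "{t..<t + e} \<subseteq> S" "0 < e"
    and deriv: "\<And>s y. s \<in> S \<Longrightarrow> ((\<lambda>s. m s y) has_real_derivative m' s y) (at s within S)"
    and mean: "\<And>s. s \<in> S \<Longrightarrow> (\<Sum>y\<in>UNIV. q y * m' s y) = 0"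
  shows "((\<lambda>h. ereal (1/h) * Hm1 (\<lambda>y. m (t + h) y - m t y)) \<longlongrightarrow> Hm1 (m' t)) (at_right 0)"
proof (rule Hm1norm_scaled_tendsto)
  have "t \<in> S" using S by auto
  have "\<forall>\<^sub>F h in at_right 0. 0 < h \<and> h < e"
    using S(3) unfolding eventually_at_right_field by blast
  then show "\<forall>\<^sub>F h in at_right 0. (\<Sum>y\<in>UNIV. q y * (m (t + h) y - m t y)) = 0"
  proof eventually_elim
    case (elim h)
    then have "t + h \<in> S" using S by auto
    then show ?case
      using weighted_sum_eq_if_has_derivative[OF S(1) deriv mean _ \<open>t \<in> S\<close>]
      by (simp add: right_diff_distrib sum_subtractf)
  qed
  show "(\<Sum>y\<in>UNIV. q y * m' t y) = 0" using mean \<open>t \<in> S\<close> .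
  show "((\<lambda>h. (m (t + h) y - m t y) / h) \<longlongrightarrow> m' t y) (at_right 0)" for y
    using difference_quotient_tendsto_at_right[OF deriv[OF \<open>t \<in> S\<close>] S(2,3)] .
qed

end

section \<open>Reversible generators\<close>

locale reversible_generator =
  fixes kap :: "'a::finite \<Rightarrow> 'a \<Rightarrow> real" and q :: "'a \<Rightarrow> real"
  assumes detailed_balance: "q x * kap x y = q y * kap y x"
    and off_diagonal_nonneg: "x \<noteq> y \<Longrightarrow> 0 \<le> kap x y"
    and row_sum_zero: "(\<Sum>y\<in>UNIV. kap x y) = 0"
    and q_pos: "0 < q x"
    and irreducible: "(x, y) \<in> {(a, b). 0 < kap a b}\<^sup>*"
begin

lemma summation_by_parts:
  assumes antisym: "\<And>x y. G y x = - G x y"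
  shows "(\<Sum>x\<in>UNIV. q x * (\<Sum>y\<in>UNIV. kap x y * G x y) * g x)
       = - (1/2) * (\<Sum>x\<in>UNIV. \<Sum>y\<in>UNIV. q x * kap x y * G x y * grad g x y)"
proof -
  define S where "S = (\<Sum>x\<in>UNIV. \<Sum>y\<in>UNIV. q x * kap x y * G x y * g x)"
  define T where "T = (\<Sum>x\<in>UNIV. \<Sum>y\<in>UNIV. q x * kap x y * G x y * g y)"
  have "S = (\<Sum>y\<in>UNIV. \<Sum>x\<in>UNIV. q x * kap x y * G x y * g x)"
    unfolding S_def by (rule sum.swap)
  also have "\<dots> = (\<Sum>y\<in>UNIV. \<Sum>x\<in>UNIV. - (q y * kap y x * G y x * g x))"
  proof (intro sum.cong refl)
    fix x y
    show "q x * kap x y * G x y * g x = - (q y * kap y x * G y x * g x)"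
      using detailed_balance[of x y] antisym[of x y] by simp
  qed
  finally have "S = - T" by (simp add: T_def sum_negf)
  then have "S + S = S - T" by simp
  also have "\<dots> = (\<Sum>x\<in>UNIV. \<Sum>y\<in>UNIV. q x * kap x y * G x y * g x - q x * kap x y * G x y * g y)"
    unfolding S_def T_def by (simp only: sum_subtractf)
  also have "\<dots> = (\<Sum>x\<in>UNIV. \<Sum>y\<in>UNIV. - (q x * kap x y * G x y * grad g x y))"
    by (simp add: grad_def right_diff_distrib)
  finally have "S + S = \<dots>" .
  moreover have "(\<Sum>x\<in>UNIV. q x * (\<Sum>y\<in>UNIV. kap x y * G x y) * g x) = S"
    unfolding S_def by (simp add: sum_distrib_left sum_distrib_right mult_ac)
  ultimately show ?thesis by (simp add: sum_negf)
qed

lemma sum_over_edges: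
  assumes "\<And>x. F x x = 0"
  shows "(\<Sum>x\<in>UNIV. \<Sum>y\<in>UNIV. kap x y * F x y) = (\<Sum>(x, y)\<in>{(x, y). 0 < kap x y}. kap x y * F x y)"
proof -
  have "(\<Sum>x\<in>UNIV. \<Sum>y\<in>UNIV. kap x y * F x y) = (\<Sum>(x, y)\<in>UNIV. kap x y * F x y)"
    by (simp add: sum.cartesian_product)
  also have "\<dots> = (\<Sum>(x, y)\<in>{(x, y). 0 < kap x y}. kap x y * F x y)"
  proof (intro sum.mono_neutral_right ballI)
    fix z assume "z \<in> UNIV - {(x, y). 0 < kap x y}"
    then show "(case z of (x, y) \<Rightarrow> kap x y * F x y) = 0"
      using off_diagonal_nonneg[of "fst z" "snd z"] assms[of "fst z"]
      by (cases "fst z = snd z") (auto simp: case_prod_beta)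
  qed auto
  finally show ?thesis .
qed

lemma flux_pairing:
  "(\<Sum>x\<in>UNIV. q x * (\<Sum>y\<in>UNIV. kap x y * flux phi phi2 l u x y) * g x) = - H1inner kap q phi phi2 l u g"
proof -
  let ?h = "\<lambda>x y. q x * flux phi phi2 l u x y * grad g x y"
  have "(\<Sum>x\<in>UNIV. \<Sum>y\<in>UNIV. q x * kap x y * flux phi phi2 l u x y * grad g x y)
      = (\<Sum>x\<in>UNIV. \<Sum>y\<in>UNIV. kap x y * ?h x y)"
    by (intro sum.cong refl) (simp add: mult_ac)
  also have "\<dots> = (\<Sum>(x, y)\<in>{(x, y). 0 < kap x y}. kap x y * ?h x y)"
    by (rule sum_over_edges) (simp add: grad_def)
  also have "\<dots> = 2 * H1inner kap q phi phi2 l u g"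
    unfolding H1inner_def sum_distrib_left by (intro sum.cong refl) (simp add: case_prod_beta flux_def mult_ac)
  finally show ?thesis
    unfolding summation_by_parts[of "flux phi phi2 l u" g, OF flux_antisym] by simp
qed

lemma divg_pairing:
  "(\<Sum>x\<in>UNIV. q x * divg kap (flux phi phi2 l u) x * g x) = - H1inner kap q phi phi2 l u g"
  unfolding divg_flux by (rule flux_pairing)

lemma divg_mean_zero: "(\<Sum>x\<in>UNIV. q x * divg kap (flux phi phi2 l u) x) = 0"
  using divg_pairing[of phi phi2 l u "\<lambda>_. 1"] by (simp add: H1inner_const_right)

lemma gen_pairing:
  assumes "strict_mono_on {0<..} phi" and "\<And>x. 0 < l x"
  shows "(\<Sum>x\<in>UNIV. q x * gen kap l x * g x) = - H1inner kap q phi phi2 l (\<lambda>y. phi (l y)) g"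
proof -
  have "gen kap l x = (\<Sum>y\<in>UNIV. kap x y * flux phi phi2 l (\<lambda>y. phi (l y)) x y)" for x
  proof -
    have "flux phi phi2 l (\<lambda>y. phi (l y)) x y = l y - l x" for y
      unfolding flux_def vartheta_def grad_def using Theta_mult_diff[OF assms(1)] assms(2) by simp
    then show ?thesis
      using row_sum_zero[of x]
      by (simp add: gen_def right_diff_distrib sum_subtractf sum_distrib_right[symmetric])
  qed
  then show ?thesis by (simp add: flux_pairing)
qed

lemma gen_mean_zero: "(\<Sum>y\<in>UNIV. q y * gen kap l y) = 0"
proof -
  have "(\<Sum>y\<in>UNIV. q y * gen kap l y) = (\<Sum>y\<in>UNIV. \<Sum>x\<in>UNIV. q x * kap x y * l x)"
    unfolding gen_def sum_distrib_left
  proof (intro sum.cong refl)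
    fix x y
    show "q y * (kap y x * l x) = q x * kap x y * l x"
      using detailed_balance[of y x] by (simp add: mult.assoc[symmetric])
  qed
  also have "\<dots> = (\<Sum>x\<in>UNIV. q x * l x * (\<Sum>y\<in>UNIV. kap x y))"
    by (subst sum.swap) (simp add: sum_distrib_left mult_ac)
  finally show ?thesis by (simp add: row_sum_zero)
qed

lemma density_has_derivative:
  assumes "((\<lambda>s. p s y) has_real_derivative (\<Sum>x\<in>UNIV. p t x * kap x y)) (at t within S)"
  shows "((\<lambda>s. p s y / q y) has_real_derivative gen kap (\<lambda>x. p t x / q x) y) (at t within S)"
proof -
  have "(\<Sum>x\<in>UNIV. p t x * kap x y) / q y = gen kap (\<lambda>x. p t x / q x) y"
    unfolding gen_def sum_divide_distrib
  proof (intro sum.cong refl)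
    fix x
    have "q y * kap y x = q x * kap x y" by (rule detailed_balance)
    then show "p t x * kap x y / q y = kap y x * (p t x / q x)"
      using q_pos[of x] q_pos[of y] by (simp add: field_simps)
  qed
  then show ?thesis using DERIV_cdivide[OF assms, of "q y"] by simp
qed

lemma H1_poincare_exists:
  assumes "strict_mono_on {0<..} phi" and "\<And>x. 0 < x \<Longrightarrow> 0 < phi2 x" and "\<And>x. 0 < l x"
  shows "\<exists>C. H1_poincare kap q phi phi2 l C"
proof -
  have weight_pos: "0 < q x * vartheta phi phi2 l x y" for x y
    using q_pos Theta_pos[OF assms(1,2)] assms(3) by (simp add: vartheta_def)
  then interpret H1_weights kap q phi phi2 l
    by unfold_locales (simp add: less_imp_le)
  have "{(a, b). 0 < kap a b \<and> 0 < q a * vartheta phi phi2 l a b} = {(a, b). 0 < kap a b}"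
    using weight_pos by auto
  then obtain C where "0 \<le> C" "\<And>g x y. \<bar>g x - g y\<bar> \<le> C * H1 g"
    using H1norm_poincare irreducible by metis
  then have "H1_poincare kap q phi phi2 l C"
    by unfold_locales
  then show ?thesis ..
qed

end

section \<open>The Markov chain\<close>

lemma kappa_of_forward_rate:
  fixes P :: "'a::finite \<Rightarrow> 'a \<Rightarrow> real"
  shows "(\<Sum>x\<in>UNIV. p x * kappa_of P x y) = (\<Sum>x\<in>UNIV. p x * P x y) - p y"
  by (simp add: kappa_of_def right_diff_distrib sum_subtractf if_distrib[of "times _"] cong: if_cong)

lemma forward_equation_pos:
  fixes P :: "'a::finite \<Rightarrow> 'a \<Rightarrow> real"
  assumes "stochastic P"
    and p_ode: "\<And>t y. 0 \<le> t \<Longrightarrow>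
      ((\<lambda>s. p s y) has_real_derivative (\<Sum>x\<in>UNIV. p t x * kappa_of P x y)) (at t within {0..})"
    and p0_pos: "\<And>y. 0 < p 0 y" and "0 \<le> t"
  shows "0 < p t y"
proof (rule ccontr)
  assume "\<not> 0 < p t y"
  have cont: "continuous_on {0..t} (\<lambda>s. p s v)" for v
  proof -
    have "continuous_on {0..} (\<lambda>s. p s v)"
      unfolding continuous_on_eq_continuous_within
      by (intro ballI) (rule DERIV_continuous[OF p_ode], simp)
    then show ?thesis by (rule continuous_on_subset) auto
  qed
  from \<open>\<not> 0 < p t y\<close> have "p t y \<le> 0" by simp
  then obtain \<tau> w where \<tau>: "\<tau> \<in> {0..t}" "p \<tau> w \<le> 0"
    and before: "\<And>s v. 0 \<le> s \<Longrightarrow> s < \<tau> \<Longrightarrow> 0 < p s v"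
    using first_nonpos_time[where f = p, OF cont \<open>0 \<le> t\<close>] by blast
  \<comment> \<open>Before \<open>\<tau>\<close> no mass flows out of \<open>w\<close> except at unit rate, so \<open>e\<^sup>s p(s, w)\<close> cannot decrease.\<close>
  have "exp 0 * p 0 w \<le> exp \<tau> * p \<tau> w"
  proof (rule DERIV_nonneg_imp_increasing_open[where f = "\<lambda>s. exp s * p s w"])
    show "continuous_on {0..\<tau>} (\<lambda>s. exp s * p s w)"
      using \<tau>(1) by (intro continuous_on_mult continuous_on_exp continuous_on_id continuous_on_subset[OF cont]) auto
  next
    fix s assume s: "0 < s" "s < \<tau>"
    then have "at s within {0..} = at s" by (intro at_within_interior) auto
    then have "((\<lambda>s. p s w) has_real_derivative (\<Sum>x\<in>UNIV. p s x * P x w) - p s w) (at s)"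
      using p_ode[of s w] s by (simp add: kappa_of_forward_rate)
    from DERIV_mult[OF DERIV_exp this]
    have "((\<lambda>s. exp s * p s w) has_real_derivative exp s * (\<Sum>x\<in>UNIV. p s x * P x w)) (at s)"
      by (simp add: algebra_simps)
    moreover have "0 \<le> (\<Sum>x\<in>UNIV. p s x * P x w)"
      using before[of s] s \<open>stochastic P\<close> by (intro sum_nonneg) (simp add: stochastic_def less_imp_le)
    ultimately show "\<exists>y. ((\<lambda>s. exp s * p s w) has_real_derivative y) (at s) \<and> 0 \<le> y"
      by auto
  qed (use \<tau> in simp)
  moreover have "exp \<tau> * p \<tau> w \<le> 0" using \<tau>(2) by (simp add: mult_nonneg_nonpos)
  ultimately show False using p0_pos[of w] by simp
qed

lemma invariant_distribution_pos:
  fixes P :: "'a::finite \<Rightarrow> 'a \<Rightarrow> real"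
  assumes "stochastic P" and "irreducible_chain P" and inv: "invariant_distribution P q"
  shows "0 < q y"
proof (rule ccontr)
  assume "\<not> 0 < q y"
  moreover have "0 \<le> q y" using inv unfolding invariant_distribution_def by simp
  ultimately have "q y = 0" by simp
  \<comment> \<open>Invariance makes the zero set of \<open>q\<close> closed under backward transitions.\<close>
  have "q x = 0" for x
  proof -
    have "(x, y) \<in> {(a, b). 0 < P a b}\<^sup>*"
      using \<open>irreducible_chain P\<close> unfolding irreducible_chain_def by blast
    then show ?thesis
    proof (induction rule: converse_rtrancl_induct)
      case (step a b)
      have "q a * P a b \<le> (\<Sum>w\<in>UNIV. q w * P w b)"
        using inv \<open>stochastic P\<close> unfolding invariant_distribution_def stochastic_def
        by (intro member_le_sum) auto
      also have "\<dots> = 0" using inv step unfolding invariant_distribution_def by simp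
      finally have "q a \<le> 0" using step by (simp add: mult_le_0_iff)
      then show ?case using inv unfolding invariant_distribution_def by (simp add: antisym)
    qed fact
  qed
  then show False using inv unfolding invariant_distribution_def by simp
qed

lemma reversible_generator_kappa_of:
  fixes P :: "'a::finite \<Rightarrow> 'a \<Rightarrow> real"
  assumes P: "stochastic P" and irred: "irreducible_chain P" and inv: "invariant_distribution P q"
    and db: "\<And>y z. q y * kappa_of P y z = q z * kappa_of P z y"
  shows "reversible_generator (kappa_of P) q"
proof
  show "q x * kappa_of P x y = q y * kappa_of P y x" for x y by (rule db)
  show "x \<noteq> y \<Longrightarrow> 0 \<le> kappa_of P x y" for x y
    using P by (simp add: stochastic_def kappa_of_def)
  show "(\<Sum>y\<in>UNIV. kappa_of P x y) = 0" for x
    using P by (simp add: stochastic_def kappa_of_def sum_subtractf)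
  show "0 < q x" for x by (rule invariant_distribution_pos[OF P irred inv])
  have "{(a, b). 0 < P a b} - Id \<subseteq> {(a, b). 0 < kappa_of P a b}"
    by (auto simp: kappa_of_def)
  moreover have "(x, y) \<in> ({(a, b). 0 < P a b} - Id)\<^sup>*" for x y
    using irred by (simp add: irreducible_chain_def rtrancl_r_diff_Id)
  ultimately show "(x, y) \<in> {(a, b). 0 < kappa_of P a b}\<^sup>*" for x y
    by (meson rtrancl_mono subsetD)
qed

theorem proposition8p5:
  fixes P :: "'a::finite \<Rightarrow> 'a \<Rightarrow> real"
    and q p0 :: "'a \<Rightarrow> real"
    and Phi phi phi2 :: "real \<Rightarrow> real"
    and p ell :: "real \<Rightarrow> 'a \<Rightarrow> real"
    and t0 \<epsilon> :: real
    and psi lpsi :: "real \<Rightarrow> 'a \<Rightarrow> real"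
  assumes stoch: "stochastic P"
    and irred: "irreducible_chain P"
    and inv: "invariant_distribution P q"
    and db: "\<forall>y z. q y * kappa_of P y z = q z * kappa_of P z y"
    and Phi_convex: "convex_on {0<..} Phi"
    and Phi_deriv: "\<forall>x>0. (Phi has_real_derivative phi x) (at x)"
    and phi_deriv: "\<forall>x>0. (phi has_real_derivative phi2 x) (at x)"
    and phi_cont: "continuous_on {0<..} phi"
    and phi2_cont: "continuous_on {0<..} phi2"
    and phi2_pos: "\<forall>x>0. phi2 x > 0"
    and Phi1: "Phi 1 = 0"
    and p0_pos: "\<forall>x. p0 x > 0"
    and p0_sum: "(\<Sum>x\<in>UNIV. p0 x) = 1"
    and p_init: "\<forall>y. p 0 y = p0 y"
    and p_ode: "\<forall>t\<ge>0. \<forall>y. ((\<lambda>s. p s y) has_real_derivative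
                   (\<Sum>x\<in>UNIV. p t x * kappa_of P x y)) (at t within {0..})"
    and ell_def: "\<forall>t y. ell t y = p t y / q y"
    and t0_pos: "t0 > 0"
    and eps_pos: "\<epsilon> > 0"
    and psi_cont: "\<forall>y. continuous_on {t0..<t0+\<epsilon>} (\<lambda>t. psi t y)"
    and lpsi_pos: "\<forall>t\<in>{t0..<t0+\<epsilon>}. \<forall>y. lpsi t y > 0"
    and lpsi_init: "lpsi t0 = ell t0"
    and lpsi_eq: "\<forall>t\<in>{t0..<t0+\<epsilon>}. \<forall>y. ((\<lambda>s. lpsi s y) has_real_derivative
                   - divg (kappa_of P) (flux phi phi2 (ell t) (psi t)) y) (at t within {t0..<t0+\<epsilon>})"
  shows "((\<lambda>h. ereal (1/h) * Hm1norm (kappa_of P) q phi phi2 (ell t0) (\<lambda>y. ell (t0+h) y - ell t0 y))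
            \<longlongrightarrow> Hm1norm (kappa_of P) q phi phi2 (ell t0) (gen (kappa_of P) (ell t0))) (at_right 0)
       \<and> Hm1norm (kappa_of P) q phi phi2 (ell t0) (gen (kappa_of P) (ell t0))
           = ereal (H1norm (kappa_of P) q phi phi2 (ell t0) (\<lambda>y. phi (ell t0 y)))
       \<and> ((\<lambda>h. ereal (1/h) * Hm1norm (kappa_of P) q phi phi2 (ell t0) (\<lambda>y. lpsi (t0+h) y - lpsi t0 y))
            \<longlongrightarrow> Hm1norm (kappa_of P) q phi phi2 (ell t0) (divg (kappa_of P) (flux phi phi2 (ell t0) (psi t0)))) (at_right 0)
       \<and> Hm1norm (kappa_of P) q phi phi2 (ell t0) (divg (kappa_of P) (flux phi phi2 (ell t0) (psi t0)))
           = ereal (H1norm (kappa_of P) q phi phi2 (ell t0) (psi t0))"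
proof -
  interpret reversible_generator "kappa_of P" q
    using reversible_generator_kappa_of[OF stoch irred inv] db by blast
  have phi_mono: "strict_mono_on {0<..} phi"
    using phi_deriv phi2_pos by (intro strict_mono_on_if_deriv_pos[where f' = phi2]) auto
  have ell: "ell t = (\<lambda>y. p t y / q y)" for t
    using ell_def by (simp add: fun_eq_iff)
  have ell_pos: "0 < ell t0 y" for y
    using forward_equation_pos[OF stoch p_ode[rule_format]] p0_pos p_init t0_pos q_pos
    unfolding ell by simp
  obtain C where "H1_poincare (kappa_of P) q phi phi2 (ell t0) C"
    using H1_poincare_exists[OF phi_mono] phi2_pos ell_pos by blast
  then interpret H1_poincare "kappa_of P" q phi phi2 "ell t0" C .
  have ell_deriv: "((\<lambda>s. ell s y) has_real_derivative gen (kappa_of P) (ell t) y) (at t within {0..})"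
    if "t \<in> {0..}" for t y
    using density_has_derivative[OF p_ode[rule_format]] that unfolding ell by simp
  have "((\<lambda>h. ereal (1/h) * Hm1 (\<lambda>y. ell (t0 + h) y - ell t0 y)) \<longlongrightarrow> Hm1 (gen (kappa_of P) (ell t0))) (at_right 0)"
    by (rule Hm1norm_difference_quotient_tendsto[of "{0..}" t0 1])
       (use t0_pos ell_deriv gen_mean_zero in auto)
  moreover have "((\<lambda>h. ereal (1/h) * Hm1 (\<lambda>y. lpsi (t0 + h) y - lpsi t0 y))
      \<longlongrightarrow> Hm1 (\<lambda>y. - divg (kappa_of P) (flux phi phi2 (ell t0) (psi t0)) y)) (at_right 0)"
    by (rule Hm1norm_difference_quotient_tendsto[of "{t0..<t0 + \<epsilon>}" t0 \<epsilon>])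
       (use eps_pos lpsi_eq divg_mean_zero in \<open>auto simp: sum_negf\<close>)
  ultimately show ?thesis
    using Hm1norm_eq_H1norm[OF gen_pairing[OF phi_mono ell_pos]] Hm1norm_eq_H1norm[OF divg_pairing]
    by (simp add: Hm1norm_uminus)
qed

end
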